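(* For all integers $n\ge k\ge 2$ and $r\ge 0$, \[ \mathsf{opt}_{\operatorname{bandit}}^{\operatorname{adap}}(n,k,r)\le k\log_k n + 2kr. \]
   Context: Prediction with expert advice: $\mathcal{Y}=\{1,\dots,k\}$, $\mathcal{X}=[k]^n$, experts $h_i(x)=x_i$, $i=1,\dots,n$. $\mathcal{P}_r$ is the set of finite sequences of examples in $\mathcal{X}\times\mathcal{Y}$ on which some $h_i$ errs on at most $r$ examples. Online learning with bandit feedback: each round the adversary presents $x_t$, the learner chooses a distribution $\pi^{(t)}$ on $\mathcal{Y}$ (depending on past observations and $x_t$) and draws $\hat y_t\sim\pi^{(t)}$, and observes only whether $\hat y_t=y_t$; a mistake is $\hat y_t\ne y_t$. An adaptive adversary chooses $x_t$ from the history, sees $\pi^{(t)}$, and chooses a distribution $\tau^{(t)}$ from which $y_t$ is drawn; it must ensure that whenever the history is realizable, each $y_t$ in the support of $\tau^{(t)}$ keeps it realizable, where a history of (instance, correct/incorrect, prediction) triples is realizable if some choice of true labels agreeing with the observations gives a sequence in $\mathcal{P}_r$. $\mathsf{opt}_{\operatorname{bandit}}^{\operatorname{adap}}(n,k,r)=\inf_{\text{learner}}\sup_{\text{adversary}}$ expected number of mistakes. *)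

theory Defs
  imports "HOL-Probability.Probability_Mass_Function" "HOL-Library.Extended_Real"
begin

text \<open>Labels: Y = {1..k}.  Instances: X = [k]^n, as lists of length n with entries in {1..k}.
  Expert i (for i < n) predicts x ! i.\<close>

definition labels :: "nat \<Rightarrow> nat set" where
  "labels k = {1..k}"

definition instances :: "nat \<Rightarrow> nat \<Rightarrow> nat list set" where
  "instances n k = {x. length x = n \<and> set x \<subseteq> labels k}"

definition P_r :: "nat \<Rightarrow> nat \<Rightarrow> nat \<Rightarrow> (nat list \<times> nat) list set" where
  "P_r n k r = {S. (\<forall>(x,y)\<in>set S. x \<in> instances n k \<and> y \<in> labels k) \<and>
      (\<exists>i<n. length (filter (\<lambda>(x,y). x ! i \<noteq> y) S) \<le> r)}"

text \<open>Observed history: triples (instance, correct?, prediction).\<close>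
type_synonym obs = "nat list \<times> bool \<times> nat"

definition realizable :: "nat \<Rightarrow> nat \<Rightarrow> nat \<Rightarrow> obs list \<Rightarrow> bool" where
  "realizable n k r H \<longleftrightarrow> (\<exists>ys :: nat list. length ys = length H \<and>
      (\<forall>j<length H. fst (snd (H ! j)) = (snd (snd (H ! j)) = ys ! j)) \<and>
      zip (map fst H) ys \<in> P_r n k r)"

text \<open>Full history of a round: (x_t, \<pi>^(t), predicted label, true label).\<close>
type_synonym fullrec = "nat list \<times> nat pmf \<times> nat \<times> nat"

definition obs_of :: "fullrec list \<Rightarrow> obs list" where
  "obs_of fh = map (\<lambda>(x,p,yh,y). (x, yh = y, yh)) fh"

type_synonym learner = "obs list \<Rightarrow> nat list \<Rightarrow> nat pmf"
type_synonym adv_x = "fullrec list \<Rightarrow> nat list"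
type_synonym adv_y = "fullrec list \<Rightarrow> nat list \<Rightarrow> nat pmf \<Rightarrow> nat pmf"

definition valid_learner :: "nat \<Rightarrow> learner \<Rightarrow> bool" where
  "valid_learner k L \<longleftrightarrow> (\<forall>H x. set_pmf (L H x) \<subseteq> labels k)"

text \<open>Adaptive adversary: chooses x_t from the full history, sees \<pi>^(t), chooses \<tau>^(t);
  realizability of the observed history must be preserved for every label in the support
  of \<tau>^(t) (whatever prediction in the support of \<pi>^(t) is drawn).\<close>
definition valid_adversary :: "nat \<Rightarrow> nat \<Rightarrow> nat \<Rightarrow> adv_x \<Rightarrow> adv_y \<Rightarrow> bool" where
  "valid_adversary n k r AX AY \<longleftrightarrow>
     (\<forall>fh. AX fh \<in> instances n k) \<and>
     (\<forall>fh x p. set_pmf (AY fh x p) \<subseteq> labels k) \<and>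
     (\<forall>fh p. realizable n k r (obs_of fh) \<longrightarrow>
        (\<forall>y\<in>set_pmf (AY fh (AX fh) p). \<forall>yh\<in>set_pmf p.
           realizable n k r (obs_of fh @ [(AX fh, yh = y, yh)])))"

fun exp_mistakes :: "learner \<Rightarrow> adv_x \<Rightarrow> adv_y \<Rightarrow> nat \<Rightarrow> fullrec list \<Rightarrow> real" where
  "exp_mistakes L AX AY 0 fh = 0"
| "exp_mistakes L AX AY (Suc T) fh =
     (let x = AX fh; p = L (obs_of fh) x; q = AY fh x p in
      measure_pmf.expectation (pair_pmf p q)
        (\<lambda>(yh, y). (if yh \<noteq> y then 1 else 0) + exp_mistakes L AX AY T (fh @ [(x, p, yh, y)])))"

definition opt_bandit_adap :: "nat \<Rightarrow> nat \<Rightarrow> nat \<Rightarrow> ereal" where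
  "opt_bandit_adap n k r =
     (INF L \<in> {L. valid_learner k L}.
        SUP (AX, AY, T) \<in> {(AX, AY, T). valid_adversary n k r AX AY}.
          ereal (exp_mistakes L AX AY T []))"

end

(* The learner runs exponential weights over the experts: every expert that the bandit feedback
   proves wrong has its weight multiplied by 1/k^2. For a label a let Q a be the fraction of the
   weight that survives if a is revealed correct. The learner plays a with probability proportional
   to 1/hit_gain (Q a), or deterministically a label with hit_gain (Q a) <= 0 if there is one.
   For the potential (k / ln k) ln W + 2kr (W the total weight), ln t <= t - 1 shows that in every
   round the expected mistake plus the expected change of the potential is nonpositive, whatever
   the label. The potential starts at k log_k n + 2kr and stays nonnegative on realizable
   histories, since some expert erred at most r times and so keeps weight at least k^(-2r). *)

theory Submission
  imports Defs
begin

definition weighted_pmf :: "'a set \<Rightarrow> ('a \<Rightarrow> real) \<Rightarrow> 'a pmf" where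
  "weighted_pmf A w = embed_pmf (\<lambda>a. if a \<in> A then w a / sum w A else 0)"

lemma pmf_weighted_pmf:
  assumes "finite A" and "\<And>a. a \<in> A \<Longrightarrow> 0 \<le> w a" and "0 < sum w A"
  shows "pmf (weighted_pmf A w) a = (if a \<in> A then w a / sum w A else 0)"
  unfolding weighted_pmf_def
proof (rule pmf_embed_pmf)
  show "0 \<le> (if a \<in> A then w a / sum w A else 0)" for a
    using assms by auto
  have "(\<integral>\<^sup>+a. ennreal (if a \<in> A then w a / sum w A else 0) \<partial>count_space UNIV)
      = (\<Sum>a\<in>A. ennreal (w a / sum w A))"
    using assms(1) by (subst nn_integral_count_space'[where A = A]) auto
  also have "\<dots> = ennreal (\<Sum>a\<in>A. w a / sum w A)"
    using assms by (intro sum_ennreal) auto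
  also have "(\<Sum>a\<in>A. w a / sum w A) = 1"
    using assms(3) by (simp add: sum_divide_distrib[symmetric])
  finally show "(\<integral>\<^sup>+a. ennreal (if a \<in> A then w a / sum w A else 0) \<partial>count_space UNIV) = 1"
    by simp
qed

lemma set_pmf_weighted_pmf:
  assumes "finite A" and "\<And>a. a \<in> A \<Longrightarrow> 0 \<le> w a" and "0 < sum w A"
  shows "set_pmf (weighted_pmf A w) \<subseteq> A"
  using pmf_weighted_pmf[OF assms] by (auto simp: set_pmf_eq)

definition hedge_pmf :: "'a set \<Rightarrow> ('a \<Rightarrow> real) \<Rightarrow> 'a pmf" where
  "hedge_pmf A D =
     (if \<exists>a\<in>A. D a \<le> 0 then return_pmf (SOME a. a \<in> A \<and> D a \<le> 0)
      else weighted_pmf A (\<lambda>a. 1 / D a))"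

lemma set_pmf_hedge_pmf:
  assumes "finite A" and "A \<noteq> {}"
  shows "set_pmf (hedge_pmf A D) \<subseteq> A"
proof (cases "\<exists>a\<in>A. D a \<le> 0")
  case True
  then have "(SOME a. a \<in> A \<and> D a \<le> 0) \<in> A"
    by (metis (mono_tags, lifting) someI_ex)
  with True show ?thesis
    unfolding hedge_pmf_def by simp
next
  case False
  then have "0 < (\<Sum>a\<in>A. 1 / D a)"
    using assms by (intro sum_pos) auto
  then have "set_pmf (weighted_pmf A (\<lambda>a. 1 / D a)) \<subseteq> A"
    using False assms(1) by (intro set_pmf_weighted_pmf) (auto simp: not_le less_imp_le)
  with False show ?thesis
    unfolding hedge_pmf_def by simp
qed

(* If D a <= 0 for some a then also M a <= 0, and the point mass at a suffices; otherwise the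
   weights 1/D a give  sum F/D <= sum M/D - 1 <= card A / (card A + 1) - 1. *)
lemma hedge_pmf_expectation_nonpos:
  fixes M D F :: "'a \<Rightarrow> real"
  assumes "finite A" and "y \<in> A"
    and M_le_D: "\<And>a. a \<in> A \<Longrightarrow> (real (card A) + 1) * M a \<le> D a"
    and F_le: "\<And>a. a \<in> A \<Longrightarrow> F a \<le> M a - (if a = y then D a else 0)"
    and "F y \<le> 0"
  shows "(\<Sum>a\<in>A. pmf (hedge_pmf A D) a * F a) \<le> 0"
proof (cases "\<exists>a\<in>A. D a \<le> 0")
  case True
  define a0 where "a0 = (SOME a. a \<in> A \<and> D a \<le> 0)"
  have a0: "a0 \<in> A" "D a0 \<le> 0"
    using True unfolding a0_def by (metis (mono_tags, lifting) someI_ex)+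
  have "(\<Sum>a\<in>A. pmf (hedge_pmf A D) a * F a) = (\<Sum>a\<in>A. if a = a0 then F a else 0)"
    using True by (intro sum.cong) (auto simp: hedge_pmf_def a0_def[symmetric])
  also have "\<dots> = F a0"
    using a0(1) assms(1) by simp
  also have "F a0 \<le> 0"
  proof (cases "a0 = y")
    case False
    have "(real (card A) + 1) * M a0 \<le> 0"
      using M_le_D[OF a0(1)] a0(2) by linarith
    then have "M a0 \<le> 0"
      by (simp add: mult_le_0_iff add_pos_nonneg)
    then show ?thesis
      using F_le[OF a0(1)] False by simp
  qed (use \<open>F y \<le> 0\<close> in simp)
  finally show ?thesis .
next
  case False
  then have D_pos: "\<And>a. a \<in> A \<Longrightarrow> 0 < D a"
    by auto
  define S where "S = (\<Sum>a\<in>A. 1 / D a)"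
  have S_pos: "0 < S"
    unfolding S_def using D_pos assms(1,2) by (intro sum_pos) auto
  have F_div_le: "F a / D a \<le> M a / D a - (if a = y then 1 else 0)" if "a \<in> A" for a
  proof -
    have "F a / D a \<le> (M a - (if a = y then D a else 0)) / D a"
      using F_le[OF that] D_pos[OF that] by (simp add: divide_right_mono)
    also have "\<dots> = M a / D a - (if a = y then 1 else 0)"
      using D_pos[OF that] by (auto simp: diff_divide_distrib)
    finally show ?thesis .
  qed
  have "(\<Sum>a\<in>A. F a / D a) \<le> (\<Sum>a\<in>A. M a / D a - (if a = y then 1 else 0))"
    using F_div_le by (rule sum_mono)
  also have "\<dots> = (\<Sum>a\<in>A. M a / D a) - 1"
    using assms(1,2) by (simp add: sum_subtractf)
  also have "\<dots> \<le> (\<Sum>a\<in>A. 1 / (real (card A) + 1)) - 1"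
    using M_le_D D_pos by (intro diff_right_mono sum_mono) (simp add: field_simps)
  also have "\<dots> \<le> 0"
    by (simp add: field_simps)
  finally have "(\<Sum>a\<in>A. F a / D a) \<le> 0" .
  moreover have "(\<Sum>a\<in>A. pmf (hedge_pmf A D) a * F a) = (\<Sum>a\<in>A. F a / D a) / S"
    using False D_pos S_pos assms(1)
    by (simp add: hedge_pmf_def pmf_weighted_pmf less_imp_le S_def[symmetric] sum_divide_distrib)
  ultimately show ?thesis
    using S_pos by (simp add: divide_nonpos_pos)
qed

lemma expectation_pair_pmf_finite:
  fixes g :: "'a \<times> 'b \<Rightarrow> real"
  assumes "finite A" and "finite B" and "set_pmf p \<subseteq> A" and "set_pmf q \<subseteq> B"
  shows "measure_pmf.expectation (pair_pmf p q) g = (\<Sum>y\<in>B. pmf q y * (\<Sum>a\<in>A. pmf p a * g (a, y)))"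
proof -
  have "measure_pmf.expectation (pair_pmf p q) g = (\<Sum>z\<in>A \<times> B. g z * pmf (pair_pmf p q) z)"
    using assms by (intro integral_measure_pmf_real) auto
  also have "\<dots> = (\<Sum>a\<in>A. \<Sum>y\<in>B. g (a, y) * (pmf p a * pmf q y))"
    by (subst sum.cartesian_product) (auto intro!: sum.cong simp: pmf_pair)
  also have "\<dots> = (\<Sum>y\<in>B. pmf q y * (\<Sum>a\<in>A. pmf p a * g (a, y)))"
    by (subst sum.swap) (simp add: sum_distrib_left mult_ac)
  finally show ?thesis .
qed

lemma sum_pmf_weighted_mono:
  fixes f g :: "'a \<Rightarrow> real"
  assumes "\<And>a. a \<in> set_pmf p \<Longrightarrow> f a \<le> g a"
  shows "(\<Sum>a\<in>A. pmf p a * f a) \<le> (\<Sum>a\<in>A. pmf p a * g a)"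
proof (intro sum_mono)
  fix a
  show "pmf p a * f a \<le> pmf p a * g a"
    using assms[of a] by (cases "a \<in> set_pmf p") (simp_all add: mult_left_mono set_pmf_iff)
qed

lemma obs_of_snoc: "obs_of (fh @ [(x, p, a, y)]) = obs_of fh @ [(x, a = y, a)]"
  by (simp add: obs_of_def)

lemma exp_mistakes_le_potential:
  fixes \<Phi> :: "obs list \<Rightarrow> real"
  assumes adv: "valid_adversary n k r AX AY"
    and learner: "valid_learner k L"
    and nonneg: "\<And>H. realizable n k r H \<Longrightarrow> 0 \<le> \<Phi> H"
    and drift: "\<And>H x y. realizable n k r H \<Longrightarrow> y \<in> labels k \<Longrightarrow>
      (\<Sum>a\<in>labels k. pmf (L H x) a * ((if a = y then 0 else 1) + \<Phi> (H @ [(x, a = y, a)]))) \<le> \<Phi> H"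
  shows "realizable n k r (obs_of fh) \<Longrightarrow> exp_mistakes L AX AY T fh \<le> \<Phi> (obs_of fh)"
proof (induction T arbitrary: fh)
  case 0
  then show ?case
    using nonneg by simp
next
  case (Suc T)
  define x where "x = AX fh"
  define p where "p = L (obs_of fh) x"
  define q where "q = AY fh x p"
  define g where "g = (\<lambda>(a, y). (if a \<noteq> y then 1 else 0) + exp_mistakes L AX AY T (fh @ [(x, p, a, y)]))"
  have set_p: "set_pmf p \<subseteq> labels k"
    using learner unfolding valid_learner_def p_def by blast
  have set_q: "set_pmf q \<subseteq> labels k"
    using adv unfolding valid_adversary_def q_def by blast
  have g_le: "g (a, y) \<le> (if a = y then 0 else 1) + \<Phi> (obs_of fh @ [(x, a = y, a)])"
    if "a \<in> set_pmf p" and "y \<in> set_pmf q" for a y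
  proof -
    have "realizable n k r (obs_of (fh @ [(x, p, a, y)]))"
      using adv Suc.prems that unfolding valid_adversary_def x_def q_def obs_of_snoc by blast
    from Suc.IH[OF this] show ?thesis
      unfolding g_def obs_of_snoc by (cases "a = y") simp_all
  qed
  have round_le: "(\<Sum>a\<in>labels k. pmf p a * g (a, y)) \<le> \<Phi> (obs_of fh)" if "y \<in> set_pmf q" for y
  proof -
    have "(\<Sum>a\<in>labels k. pmf p a * g (a, y))
        \<le> (\<Sum>a\<in>labels k. pmf p a * ((if a = y then 0 else 1) + \<Phi> (obs_of fh @ [(x, a = y, a)])))"
      using g_le[OF _ that] by (rule sum_pmf_weighted_mono)
    also have "\<dots> \<le> \<Phi> (obs_of fh)"
      unfolding p_def using drift Suc.prems set_q that by blast
    finally show ?thesis .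
  qed
  have "exp_mistakes L AX AY (Suc T) fh = measure_pmf.expectation (pair_pmf p q) g"
    by (simp add: x_def p_def q_def g_def Let_def)
  also have "\<dots> = (\<Sum>y\<in>labels k. pmf q y * (\<Sum>a\<in>labels k. pmf p a * g (a, y)))"
    using set_p set_q by (intro expectation_pair_pmf_finite) (auto simp: labels_def)
  also have "\<dots> \<le> (\<Sum>y\<in>labels k. pmf q y * \<Phi> (obs_of fh))"
    using round_le by (rule sum_pmf_weighted_mono)
  also have "\<dots> = \<Phi> (obs_of fh)"
    using sum_pmf_eq_1[OF _ set_q] by (simp add: labels_def sum_distrib_right[symmetric])
  finally show ?case .
qed

lemma opt_bandit_adap_le:
  assumes "valid_learner k L"
    and "\<And>AX AY T. valid_adversary n k r AX AY \<Longrightarrow> exp_mistakes L AX AY T [] \<le> B"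
  shows "opt_bandit_adap n k r \<le> ereal B"
proof -
  have "opt_bandit_adap n k r \<le> (SUP (AX, AY, T) \<in> {(AX, AY, T). valid_adversary n k r AX AY}.
      ereal (exp_mistakes L AX AY T []))"
    unfolding opt_bandit_adap_def using assms(1) by (intro INF_lower) simp
  also have "\<dots> \<le> ereal B"
    using assms(2) by (intro SUP_least) auto
  finally show ?thesis .
qed

(* Expert i
   is known to be wrong iff (x ! i = a) differs from b; after a wrong prediction the experts that
   did not predict a are undetermined and are not penalized. *)
definition known_errors :: "obs list \<Rightarrow> nat \<Rightarrow> nat" where
  "known_errors H i = length (filter (\<lambda>(x, b, a). (x ! i = a) \<noteq> b) H)"

lemma known_errors_snoc:
  "known_errors (H @ [(x, b, a)]) i = known_errors H i + (if (x ! i = a) \<noteq> b then 1 else 0)"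
  by (simp add: known_errors_def)

lemma realizable_known_errors:
  assumes "realizable n k r H"
  obtains i where "i < n" and "known_errors H i \<le> r"
proof -
  obtain ys where len: "length ys = length H"
    and consistent: "\<forall>j<length H. fst (snd (H ! j)) = (snd (snd (H ! j)) = ys ! j)"
    and "zip (map fst H) ys \<in> P_r n k r"
    using assms unfolding realizable_def by blast
  then obtain i where "i < n" and r_bound: "length (filter (\<lambda>(x, y). x ! i \<noteq> y) (zip (map fst H) ys)) \<le> r"
    unfolding P_r_def by blast
  let ?zs = "zip (map fst H) ys"
  have "{j. j < length H \<and> (\<lambda>(x, b, a). (x ! i = a) \<noteq> b) (H ! j)}
      \<subseteq> {j. j < length ?zs \<and> (\<lambda>(x, y). x ! i \<noteq> y) (?zs ! j)}"
  proof
    fix j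
    assume "j \<in> {j. j < length H \<and> (\<lambda>(x, b, a). (x ! i = a) \<noteq> b) (H ! j)}"
    then have j: "j < length H" and wrong: "(\<lambda>(x, b, a). (x ! i = a) \<noteq> b) (H ! j)"
      by auto
    have "fst (H ! j) ! i \<noteq> ys ! j"
      using consistent j wrong by (cases "H ! j") auto
    with j len show "j \<in> {j. j < length ?zs \<and> (\<lambda>(x, y). x ! i \<noteq> y) (?zs ! j)}"
      by simp
  qed
  then have "known_errors H i \<le> length (filter (\<lambda>(x, y). x ! i \<noteq> y) ?zs)"
    unfolding known_errors_def length_filter_conv_card by (intro card_mono) auto
  with \<open>i < n\<close> r_bound show thesis
    using that by simp
qed

lemma realizable_Nil: "0 < n \<Longrightarrow> realizable n k r []"
  unfolding realizable_def P_r_def by auto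

definition total_weight :: "nat \<Rightarrow> real \<Rightarrow> obs list \<Rightarrow> real" where
  "total_weight n \<beta> H = (\<Sum>i<n. \<beta> ^ known_errors H i)"

lemma total_weight_pos: "0 < \<beta> \<Longrightarrow> 0 < n \<Longrightarrow> 0 < total_weight n \<beta> H"
  unfolding total_weight_def by (intro sum_pos) auto

lemma total_weight_snoc_le:
  assumes "0 \<le> \<beta>" and "\<beta> \<le> 1"
  shows "total_weight n \<beta> (H @ [z]) \<le> total_weight n \<beta> H"
  unfolding total_weight_def known_errors_def using assms by (intro sum_mono power_decreasing) auto

lemma total_weight_snoc_split:
  "total_weight n \<beta> (H @ [(x, True, a)]) + total_weight n \<beta> (H @ [(x, False, a)])
     = (1 + \<beta>) * total_weight n \<beta> H"
  unfolding total_weight_def known_errors_snoc sum.distrib[symmetric] sum_distrib_left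
  by (intro sum.cong) (auto simp: algebra_simps)

lemma total_weight_ge_if_realizable:
  assumes "realizable n k r H" and "0 < \<beta>" and "\<beta> \<le> 1"
  shows "\<beta> ^ r \<le> total_weight n \<beta> H"
proof -
  obtain i where "i < n" and "known_errors H i \<le> r"
    using assms(1) by (rule realizable_known_errors)
  then have "\<beta> ^ r \<le> \<beta> ^ known_errors H i"
    using assms(2,3) by (intro power_decreasing) auto
  also have "\<dots> \<le> total_weight n \<beta> H"
    unfolding total_weight_def using \<open>i < n\<close> assms(2) by (intro member_le_sum) auto
  finally show ?thesis .
qed

definition label_mass :: "nat \<Rightarrow> real \<Rightarrow> obs list \<Rightarrow> nat list \<Rightarrow> nat \<Rightarrow> real" where
  "label_mass n \<beta> H x a = total_weight n \<beta> (H @ [(x, True, a)]) / total_weight n \<beta> H"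

lemma label_mass_pos: "0 < \<beta> \<Longrightarrow> 0 < n \<Longrightarrow> 0 < label_mass n \<beta> H x a"
  unfolding label_mass_def by (simp add: total_weight_pos)

lemma label_mass_le_1: "0 < \<beta> \<Longrightarrow> \<beta> \<le> 1 \<Longrightarrow> 0 < n \<Longrightarrow> label_mass n \<beta> H x a \<le> 1"
  unfolding label_mass_def by (simp add: total_weight_pos total_weight_snoc_le)

definition penalty :: "nat \<Rightarrow> real" where
  "penalty k = 1 / real k ^ 2"

definition potential_scale :: "nat \<Rightarrow> real" where
  "potential_scale k = real k / ln (real k)"

definition potential :: "nat \<Rightarrow> nat \<Rightarrow> nat \<Rightarrow> obs list \<Rightarrow> real" where
  "potential n k r H = potential_scale k * ln (total_weight n (penalty k) H) + 2 * real k * real r"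

lemma penalty_pos: "1 \<le> k \<Longrightarrow> 0 < penalty k"
  by (simp add: penalty_def)

lemma penalty_le_1: "1 \<le> k \<Longrightarrow> penalty k \<le> 1"
  by (simp add: penalty_def)

lemma potential_scale_pos: "2 \<le> k \<Longrightarrow> 0 < potential_scale k"
  by (simp add: potential_scale_def)

lemma potential_Nil: "potential n k r [] = real k * log (real k) (real n) + 2 * real k * real r"
  by (simp add: potential_def potential_scale_def total_weight_def known_errors_def log_def)

lemma potential_nonneg:
  assumes "2 \<le> k" and "realizable n k r H"
  shows "0 \<le> potential n k r H"
proof -
  have "penalty k ^ r \<le> total_weight n (penalty k) H"
    using assms by (intro total_weight_ge_if_realizable) (auto simp: penalty_pos penalty_le_1)
  then have ln_le: "ln (penalty k ^ r) \<le> ln (total_weight n (penalty k) H)"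
    using assms(1) by (intro ln_mono) (simp_all add: penalty_pos)
  have "- 2 * real k * real r = potential_scale k * ln (penalty k ^ r)"
    using assms(1) by (simp add: potential_scale_def penalty_def ln_realpow ln_div)
  also have "\<dots> \<le> potential_scale k * ln (total_weight n (penalty k) H)"
    using ln_le potential_scale_pos[OF assms(1)] by (simp add: mult_left_mono)
  finally show ?thesis
    unfolding potential_def by linarith
qed

lemma potential_snoc:
  fixes H :: "obs list" and x :: "nat list"
  assumes "2 \<le> k" and "0 < n"
  defines "Q \<equiv> label_mass n (penalty k) H x"
  shows "potential n k r (H @ [(x, b, a)])
    = potential n k r H + potential_scale k * ln (if b then Q a else 1 + penalty k - Q a)"
proof -
  let ?W = "total_weight n (penalty k)"
  have W_pos: "0 < ?W H" and Q_pos: "0 < Q a" and Q_le: "Q a \<le> 1"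
    using assms by (simp_all add: total_weight_pos label_mass_pos label_mass_le_1 penalty_pos penalty_le_1)
  have "?W (H @ [(x, b, a)]) = ?W H * (if b then Q a else 1 + penalty k - Q a)"
  proof (cases b)
    case True
    then show ?thesis
      unfolding Q_def label_mass_def using W_pos by simp
  next
    case False
    have "?W (H @ [(x, False, a)]) = (1 + penalty k) * ?W H - ?W (H @ [(x, True, a)])"
      using total_weight_snoc_split[of n "penalty k" H x a] by simp
    also have "\<dots> = ?W H * (1 + penalty k - Q a)"
      unfolding Q_def label_mass_def using W_pos by (simp add: field_simps)
    finally show ?thesis
      using False by simp
  qed
  moreover have "0 < (if b then Q a else 1 + penalty k - Q a)"
    using Q_pos Q_le penalty_pos[of k] assms(1) by auto
  ultimately show ?thesis
    unfolding potential_def using W_pos by (simp add: ln_mult algebra_simps)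
qed

definition miss_bound :: "nat \<Rightarrow> real \<Rightarrow> real" where
  "miss_bound k q = 1 + potential_scale k * (penalty k - q)"

definition hit_gain :: "nat \<Rightarrow> real \<Rightarrow> real" where
  "hit_gain k q = miss_bound k q + potential_scale k * (ln (real k) + 1 - real k * q)"

lemma miss_bound_le_hit_gain:
  assumes "2 \<le> k"
  shows "(real k + 1) * miss_bound k q \<le> hit_gain k q"
proof -
  have "(real k + 1) * miss_bound k q - hit_gain k q = potential_scale k * (1 / real k - 1)"
    using assms by (simp add: miss_bound_def hit_gain_def potential_scale_def penalty_def
        field_simps power2_eq_square)
  also have "\<dots> \<le> 0"
    using assms potential_scale_pos[OF assms] by (intro mult_nonneg_nonpos) auto
  finally show ?thesis
    by simp
qed

lemma miss_step_le:
  assumes "2 \<le> k" and "q \<le> 1"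
  shows "1 + potential_scale k * ln (1 + penalty k - q) \<le> miss_bound k q"
proof -
  have "ln (1 + penalty k - q) \<le> penalty k - q"
    using ln_le_minus_one[of "1 + penalty k - q"] assms penalty_pos[of k] by auto
  then show ?thesis
    unfolding miss_bound_def using potential_scale_pos[OF assms(1)] by (simp add: mult_left_mono)
qed

lemma hit_step_le:
  assumes "2 \<le> k" and "0 < q"
  shows "potential_scale k * ln q \<le> miss_bound k q - hit_gain k q"
proof -
  have "ln (real k) + ln q \<le> real k * q - 1"
    using ln_le_minus_one[of "real k * q"] assms by (simp add: ln_mult)
  then have "potential_scale k * ln q \<le> potential_scale k * - (ln (real k) + 1 - real k * q)"
    using potential_scale_pos[OF assms(1)] by (intro mult_left_mono) auto
  then show ?thesis
    unfolding hit_gain_def by (simp add: algebra_simps)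
qed

definition bandit_learner :: "nat \<Rightarrow> nat \<Rightarrow> learner" where
  "bandit_learner n k H x = hedge_pmf (labels k) (\<lambda>a. hit_gain k (label_mass n (penalty k) H x a))"

lemma valid_bandit_learner: "1 \<le> k \<Longrightarrow> valid_learner k (bandit_learner n k)"
  unfolding valid_learner_def bandit_learner_def labels_def by (simp add: set_pmf_hedge_pmf)

lemma bandit_learner_drift:
  assumes "2 \<le> k" and "0 < n" and y: "y \<in> labels k"
  shows "(\<Sum>a\<in>labels k. pmf (bandit_learner n k H x) a *
      ((if a = y then 0 else 1) + potential n k r (H @ [(x, a = y, a)]))) \<le> potential n k r H"
proof -
  define Q where "Q = label_mass n (penalty k) H x"
  define p where "p = bandit_learner n k H x"
  define F where "F a = (if a = y then 0 else 1)
      + potential_scale k * ln (if a = y then Q a else 1 + penalty k - Q a)" for a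
  have Q_pos: "0 < Q a" and Q_le: "Q a \<le> 1" for a
    using assms unfolding Q_def by (simp_all add: label_mass_pos label_mass_le_1 penalty_pos penalty_le_1)
  have "(\<Sum>a\<in>labels k. pmf p a * F a) \<le> 0"
    unfolding p_def bandit_learner_def Q_def[symmetric]
  proof (rule hedge_pmf_expectation_nonpos)
    show "(real (card (labels k)) + 1) * miss_bound k (Q a) \<le> hit_gain k (Q a)" for a
      using miss_bound_le_hit_gain[OF assms(1)] by (simp add: labels_def)
    show "F a \<le> miss_bound k (Q a) - (if a = y then hit_gain k (Q a) else 0)" for a
      unfolding F_def using hit_step_le[OF assms(1) Q_pos] miss_step_le[OF assms(1) Q_le]
      by simp
    show "F y \<le> 0"
      unfolding F_def using Q_pos Q_le potential_scale_pos[OF assms(1)]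
      by (simp add: mult_nonneg_nonpos)
  qed (use y in \<open>auto simp: labels_def\<close>)
  moreover have "(\<Sum>a\<in>labels k. pmf p a) = 1"
    unfolding p_def using valid_bandit_learner[of k n] assms(1)
    by (intro sum_pmf_eq_1) (auto simp: labels_def valid_learner_def)
  moreover have "(if a = y then 0 else 1) + potential n k r (H @ [(x, a = y, a)]) = F a + potential n k r H"
    for a
    unfolding F_def Q_def using potential_snoc[OF assms(1,2)] by simp
  ultimately show ?thesis
    unfolding p_def[symmetric] by (simp add: distrib_left sum.distrib flip: sum_distrib_right)
qed

theorem theorem4p7:
  fixes n k r :: nat
  assumes "2 \<le> k" and "k \<le> n"
  shows "opt_bandit_adap n k r \<le> ereal (real k * log (real k) (real n) + 2 * real k * real r)"
proof -
  have "0 < n"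
    using assms by simp
  have "exp_mistakes (bandit_learner n k) AX AY T [] \<le> potential n k r []"
    if adv: "valid_adversary n k r AX AY" for AX AY T
  proof -
    have "realizable n k r (obs_of [])"
      using realizable_Nil[OF \<open>0 < n\<close>] by (simp add: obs_of_def)
    from exp_mistakes_le_potential[where \<Phi> = "potential n k r", OF adv valid_bandit_learner
        potential_nonneg bandit_learner_drift this]
    show ?thesis
      using assms(1) \<open>0 < n\<close> by (simp add: obs_of_def)
  qed
  then show ?thesis
    unfolding potential_Nil[symmetric] using assms(1)
    by (intro opt_bandit_adap_le[OF valid_bandit_learner]) auto
qed

end
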